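(* Let $\alpha\in(0,\kappa(\mathbf{A})^{-1/2})$ and let $\lambda>0$ satisfy $\alpha\le\kappa(\mathbf{A})^{-1/2}(1-\|\mathbf{A}\|\lambda^2)^{1/2}$. Let $\Lambda=\Lambda_0\times\cdots\times\Lambda_J\subset\mathcal{G}$ be a finite product set and $\mathbf{w}_\Lambda\in\ell_2(\mathcal{G})$ with $\operatorname{supp}\mathbf{w}_\Lambda\subseteq\Lambda$. Assume that $\pi^{(0)}(\mathbf{u})\in\mathcal{A}^{s_1}(\mathcal{G}_0)$ and $\pi^{(j)}(\mathbf{u})\in\mathcal{A}^{s_2}(\mathcal{G}_j)$ for $j=1,\dots,J$, with $s_1,s_2>0$. Let $\Lambda^*=\Lambda^*_0\times\cdots\times\Lambda^*_J\subset\mathcal{G}$ be a minimizer of $\sum_{j=0}^J\#(\Lambda^*_j\setminus\Lambda_j)$ among the product sets satisfying \[\|\mathbf{R}_{\Lambda^*}(\mathbf{A}\mathbf{w}_\Lambda-\mathbf{f})\|\ge\alpha\|\mathbf{A}\mathbf{w}_\Lambda-\mathbf{f}\|.\] Then \[ \sum_{j=0}^J\#(\Lambda^*_j\setminus\Lambda_j)\le 2C^{1/s_1}\|\mathbf{A}\mathbf{w}_\Lambda-\mathbf{f}\|^{-1/s_1}\|\pi^{(0)}(\mathbf{u})\|_{\mathcal{A}^{s_1}}^{1/s_1}+2C^{1/s_2}\|\mathbf{A}\mathbf{w}_\Lambda-\mathbf{f}\|^{-1/s_2}\sum_{j=1}^J\|\pi^{(j)}(\mathbf{u})\|_{\mathcal{A}^{s_2}}^{1/s_2},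 \] where $C=(J+1)\sqrt{\|\mathbf{A}\|}/\lambda$.
   Context: Parametric problem: $D\subset\mathbb{R}^d$ a domain, $V=H^1_0(D)$, $f\in L_2(D)$, $a(x,y)=\bar a(x)+\sum_{j\ge1}y_j\theta_j(x)$ with $\bar a,\theta_j\in L_\infty(D)$, $y\in Y=[-1,1]^{\mathbb{N}}$, and $\bar a-\sum_j|\theta_j|\ge r>0$. Let $\sigma$ be the uniform product probability measure on $Y$, $\mathcal{F}=\{\nu\in\mathbb{N}_0^{\mathbb{N}}:$ finitely many nonzero entries$\}$, $L_\nu(y)=\prod_i L_{\nu_i}(y_i)$ the $L_2(Y;\sigma)$-orthonormal product Legendre polynomials, and $\{\psi_\lambda\}_{\lambda\in\mathcal{S}}$ a Riesz basis of $V$. The operator $\mathbf{A}$ on $\ell_2(\mathcal{F}\times\mathcal{S})$ has entries $\mathbf{A}_{(\nu,\lambda),(\nu',\lambda')}=\int_Y\int_D a(x,y)\nabla\psi_{\lambda'}\cdot\nabla\psi_\lambda\,L_\nu L_{\nu'}\,dx\,d\sigma(y)$, and $\mathbf{f}_{(\nu,\lambda)}=\int_D f\psi_\lambda\,dx\int_Y L_\nu\,d\sigma$; $\mathbf{A}$ is bounded, symmetric and positive definite on $\ell_2$, $\kappa(\mathbf{A})=\|\mathbf{A}\|\|\mathbf{A}^{-1}\|$, and $\mathbf{u}$ is the solution of $\mathbf{A}\mathbf{u}=\mathbf{f}$. Fix $J\ge1$ and identify $\mathcal{F}\times\mathcal{S}$ with $\mathcal{G}=\mathcal{G}_0\times\mathcal{G}_1\times\cdots\times\mathcal{G}_J$,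 where $\mathcal{G}_0=\mathcal{F}\times\mathcal{S}$ (index $(\bar\nu,\lambda)$ with $\bar\nu=(\nu_{J+1},\nu_{J+2},\dots)$ the tail multi-index) and $\mathcal{G}_j=\mathbb{N}_0$ (index $\nu_j$) for $j=1,\dots,J$. $\|\cdot\|$ denotes the $\ell_2$ norm; a product set is $\Lambda_0\times\cdots\times\Lambda_J$ with $\Lambda_j\subseteq\mathcal{G}_j$; $\mathbf{R}_\Lambda$ is pointwise multiplication by the indicator of $\Lambda$. Contractions of $\mathbf{v}\in\ell_2(\mathcal{G})$: $\pi^{(0)}(\mathbf{v})\in\ell_2(\mathcal{G}_0)$ with $\pi^{(0)}_{(\bar\nu,\lambda)}(\mathbf{v})=(\sum_{(\nu_1,\dots,\nu_J)}|\mathbf{v}_{(\bar\nu,\lambda),\nu_1,\dots,\nu_J}|^2)^{1/2}$, and for $j=1,\dots,J$, $\pi^{(j)}(\mathbf{v})\in\ell_2(\mathcal{G}_j)$ with $\pi^{(j)}_{\nu_j}(\mathbf{v})=(\sum_{(\bar\nu,\lambda)}\sum_{\nu_i,\,i\neq j}|\mathbf{v}_{(\bar\nu,\lambda),\nu_1,\dots,\nu_J}|^2)^{1/2}$. Approximation classes: for a countable set $\mathcal{H}$ and $s>0$, $\mathcal{A}^s(\mathcal{H})$ is the set of $\mathbf{v}\in\ell_2(\mathcal{H})$ with $\|\mathbf{v}\|_{\mathcal{A}^s}:=\sup_{N\in\mathbb{N}_0}(N+1)^s\inf_{\#\operatorname{supp}\mathbf{v}_N\le N}\|\mathbf{v}-\mathbf{v}_N\|<\infty$.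 *)

theory Defs
  imports "HOL-Analysis.Analysis"
begin

text \<open>Index set G = G_0 x G_1 x ... x G_J, with G_0 an arbitrary type 'a
  (standing for F x S) and G_j = nat for j = 1..J.\<close>

definition Gset :: "nat \<Rightarrow> ('a \<times> (nat \<Rightarrow> nat)) set" where
  "Gset J = UNIV \<times> ({1..J} \<rightarrow>\<^sub>E UNIV)"

definition is_l2 :: "'b set \<Rightarrow> ('b \<Rightarrow> real) \<Rightarrow> bool" where
  "is_l2 H v \<longleftrightarrow> (\<forall>x. x \<notin> H \<longrightarrow> v x = 0) \<and> (\<lambda>x. (v x)^2) summable_on H"

definition l2norm :: "('b \<Rightarrow> real) \<Rightarrow> real" where
  "l2norm v = sqrt (infsum (\<lambda>x. (v x)^2) UNIV)"

definition l2inner :: "('b \<Rightarrow> real) \<Rightarrow> ('b \<Rightarrow> real) \<Rightarrow> real" where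
  "l2inner v w = infsum (\<lambda>x. v x * w x) UNIV"

text \<open>Operator norm of A on l2(H) and norm of its inverse
  (for a bijective A, sup ||v||/||Av|| = ||A^{-1}||).\<close>
definition opnorm :: "'b set \<Rightarrow> (('b \<Rightarrow> real) \<Rightarrow> ('b \<Rightarrow> real)) \<Rightarrow> real" where
  "opnorm H A = Sup {l2norm (A v) / l2norm v | v. is_l2 H v \<and> v \<noteq> (\<lambda>_. 0)}"

definition invnorm :: "'b set \<Rightarrow> (('b \<Rightarrow> real) \<Rightarrow> ('b \<Rightarrow> real)) \<Rightarrow> real" where
  "invnorm H A = Sup {l2norm v / l2norm (A v) | v. is_l2 H v \<and> v \<noteq> (\<lambda>_. 0)}"

definition cond_number :: "'b set \<Rightarrow> (('b \<Rightarrow> real) \<Rightarrow> ('b \<Rightarrow> real)) \<Rightarrow> real" where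
  "cond_number H A = opnorm H A * invnorm H A"

definition bounded_spd :: "'b set \<Rightarrow> (('b \<Rightarrow> real) \<Rightarrow> ('b \<Rightarrow> real)) \<Rightarrow> bool" where
  "bounded_spd H A \<longleftrightarrow>
     (\<forall>v. is_l2 H v \<longrightarrow> is_l2 H (A v)) \<and>
     (\<forall>v w. is_l2 H v \<longrightarrow> is_l2 H w \<longrightarrow> A (\<lambda>x. v x + w x) = (\<lambda>x. A v x + A w x)) \<and>
     (\<forall>v c. is_l2 H v \<longrightarrow> A (\<lambda>x. c * v x) = (\<lambda>x. c * A v x)) \<and>
     (\<exists>M. \<forall>v. is_l2 H v \<longrightarrow> l2norm (A v) \<le> M * l2norm v) \<and>
     (\<forall>v w. is_l2 H v \<longrightarrow> is_l2 H w \<longrightarrow> l2inner (A v) w = l2inner v (A w)) \<and>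
     (\<exists>c>0. \<forall>v. is_l2 H v \<longrightarrow> l2inner (A v) v \<ge> c * (l2norm v)^2)"

definition pi0 :: "nat \<Rightarrow> ('a \<times> (nat \<Rightarrow> nat) \<Rightarrow> real) \<Rightarrow> 'a \<Rightarrow> real" where
  "pi0 J v g = sqrt (infsum (\<lambda>nu. (v (g, nu))^2) ({1..J} \<rightarrow>\<^sub>E UNIV))"

definition pij :: "nat \<Rightarrow> ('a \<times> (nat \<Rightarrow> nat) \<Rightarrow> real) \<Rightarrow> nat \<Rightarrow> nat \<Rightarrow> real" where
  "pij J v j n = sqrt (infsum (\<lambda>x. (v x)^2) {x \<in> Gset J. snd x j = n})"

definition best_N_err :: "'b set \<Rightarrow> ('b \<Rightarrow> real) \<Rightarrow> nat \<Rightarrow> real" where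
  "best_N_err H v N = Inf {l2norm (\<lambda>x. v x - w x) | w.
       {x. w x \<noteq> 0} \<subseteq> H \<and> finite {x. w x \<noteq> 0} \<and> card {x. w x \<noteq> 0} \<le> N}"

definition in_As :: "'b set \<Rightarrow> real \<Rightarrow> ('b \<Rightarrow> real) \<Rightarrow> bool" where
  "in_As H s v \<longleftrightarrow> is_l2 H v \<and> bdd_above (range (\<lambda>N. (real N + 1) powr s * best_N_err H v N))"

definition As_norm :: "'b set \<Rightarrow> real \<Rightarrow> ('b \<Rightarrow> real) \<Rightarrow> real" where
  "As_norm H s v = (SUP N. (real N + 1) powr s * best_N_err H v N)"

definition prodset :: "nat \<Rightarrow> 'a set \<Rightarrow> (nat \<Rightarrow> nat set) \<Rightarrow> ('a \<times> (nat \<Rightarrow> nat)) set" where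
  "prodset J L0 Ls = L0 \<times> PiE {1..J} Ls"

definition Rset :: "'b set \<Rightarrow> ('b \<Rightarrow> real) \<Rightarrow> 'b \<Rightarrow> real" where
  "Rset L v = (\<lambda>x. if x \<in> L then v x else 0)"

definition cost :: "nat \<Rightarrow> 'a set \<Rightarrow> (nat \<Rightarrow> nat set) \<Rightarrow> 'a set \<Rightarrow> (nat \<Rightarrow> nat set) \<Rightarrow> nat" where
  "cost J L0 Ls M0 Ms = card (M0 - L0) + (\<Sum>j = 1..J. card (Ms j - Ls j))"

definition finite_diff :: "nat \<Rightarrow> 'a set \<Rightarrow> (nat \<Rightarrow> nat set) \<Rightarrow> 'a set \<Rightarrow> (nat \<Rightarrow> nat set) \<Rightarrow> bool" where
  "finite_diff J L0 Ls M0 Ms \<longleftrightarrow> finite (M0 - L0) \<and> (\<forall>j\<in>{1..J}. finite (Ms j - Ls j))"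

end

theory Submission
  imports Defs
begin

text \<open>Let r = A w - f = A (w - u) and R = |r|. For the tolerance delta = R / C the approximation
  classes give index sets T_0, ..., T_J with #T_j <= (|pi^(j)(u)|_(A^s) / delta)^(1/s), outside of
  which the j-th contraction of u has energy at most delta^2. So u is approximated on the product set
  M = (Lambda_0 \<union> T_0) x ... x (Lambda_J \<union> T_J) up to (J + 1) delta^2, and C is chosen exactly so that
  |A| |u - R_M u|^2 <= lambda^2 R^2. Splitting the energy of the error w - u along R_M u and using the
  coercivity constant 1 / |A^-1| of A yields |R_M r|^2 >= (1 - |A| lambda^2) R^2 / kappa(A) >= alpha^2 R^2.
  Thus M is admissible, and by minimality the cost of Lambda^* is at most #T_0 + ... + #T_J; the
  factor 2 in the bound is slack.\<close>

section \<open>Square-summable vectors\<close>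

definition square_summable :: "('b \<Rightarrow> real) \<Rightarrow> bool" where
  "square_summable v \<longleftrightarrow> (\<lambda>x. (v x)^2) summable_on UNIV"

lemma is_l2_imp_square_summable: "is_l2 H v \<Longrightarrow> square_summable v"
  unfolding is_l2_def square_summable_def
  by (subst summable_on_cong_neutral[of H UNIV _ "\<lambda>x. (v x)^2"]) auto

lemma square_summable_finite_support: "finite {x. v x \<noteq> 0} \<Longrightarrow> square_summable v"
  unfolding square_summable_def
  by (subst summable_on_cong_neutral[of "{x. v x \<noteq> 0}" UNIV _ "\<lambda>x. (v x)^2"]) auto

lemma square_summable_imp_summable_mult:
  assumes "square_summable v" "square_summable w"
  shows "(\<lambda>x. v x * w x) summable_on UNIV"
proof -
  have "(\<lambda>x. (v x)^2 + (w x)^2) summable_on UNIV"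
    using assms unfolding square_summable_def by (rule summable_on_add)
  then have "(\<lambda>x. norm (v x * w x)) summable_on UNIV"
  proof (rule summable_on_comparison_test)
    fix x
    have "0 \<le> \<bar>v x\<bar> * \<bar>w x\<bar>" and "2 * (\<bar>v x\<bar> * \<bar>w x\<bar>) \<le> (v x)^2 + (w x)^2"
      using sum_squares_bound[of "\<bar>v x\<bar>" "\<bar>w x\<bar>"] by simp_all
    then have "\<bar>v x\<bar> * \<bar>w x\<bar> \<le> (v x)^2 + (w x)^2"
      by linarith
    then show "norm (v x * w x) \<le> (v x)^2 + (w x)^2"
      by (simp add: abs_mult)
  qed simp
  then show ?thesis
    using summable_on_iff_abs_summable_on_real by blast
qed

lemma square_summable_lincomb:
  assumes "square_summable v" "square_summable w"
  shows "square_summable (\<lambda>x. v x + t * w x)"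
proof -
  have "(\<lambda>x. (v x)^2 + t^2 * (w x)^2 + 2 * t * (v x * w x)) summable_on UNIV"
    using assms square_summable_imp_summable_mult[OF assms] unfolding square_summable_def
    by (intro summable_on_add summable_on_cmult_right)
  then show ?thesis
    unfolding square_summable_def by (simp add: power2_sum power_mult_distrib algebra_simps)
qed

lemma square_summable_diff:
  "square_summable v \<Longrightarrow> square_summable w \<Longrightarrow> square_summable (\<lambda>x. v x - w x)"
  using square_summable_lincomb[of v w "-1"] by simp

lemma is_l2_lincomb: "is_l2 H v \<Longrightarrow> is_l2 H w \<Longrightarrow> is_l2 H (\<lambda>x. v x + t * w x)"
  using square_summable_lincomb[OF is_l2_imp_square_summable is_l2_imp_square_summable, of H v H w t]
  unfolding is_l2_def square_summable_def by (auto intro: summable_on_subset)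

lemma is_l2_diff: "is_l2 H v \<Longrightarrow> is_l2 H w \<Longrightarrow> is_l2 H (\<lambda>x. v x - w x)"
  using is_l2_lincomb[of H v w "-1"] by simp

lemma is_l2_zero: "is_l2 H (\<lambda>_. 0)"
  unfolding is_l2_def by simp

lemma is_l2_Rset:
  assumes "is_l2 H v"
  shows "is_l2 H (Rset P v)"
proof -
  have "(\<lambda>x. (Rset P v x)^2) summable_on H"
    using assms unfolding is_l2_def
    by (elim conjE summable_on_comparison_test) (simp_all add: Rset_def)
  then show ?thesis
    using assms unfolding is_l2_def Rset_def by auto
qed

lemma infsum_square_nonneg: "0 \<le> infsum (\<lambda>x. (v x :: real)^2) X"
  by (rule infsum_nonneg) simp

lemma l2norm_nonneg: "0 \<le> l2norm v"
  unfolding l2norm_def using infsum_square_nonneg by simp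

lemma l2norm_square: "(l2norm v)^2 = infsum (\<lambda>x. (v x)^2) UNIV"
  unfolding l2norm_def using infsum_square_nonneg by simp

lemma l2norm_zero: "l2norm (\<lambda>_. 0) = 0"
  unfolding l2norm_def by simp

lemma l2norm_diff_commute: "l2norm (\<lambda>x. v x - w x) = l2norm (\<lambda>x. w x - v x)"
  unfolding l2norm_def by (simp add: power2_commute)

lemma l2norm_pos:
  assumes "square_summable v" "v \<noteq> (\<lambda>_. 0)"
  shows "0 < l2norm v"
proof -
  obtain x0 where x0: "v x0 \<noteq> 0"
    using assms(2) by auto
  have "(v x0)^2 = infsum (\<lambda>x. (v x)^2) {x0}"
    by simp
  also have "\<dots> \<le> infsum (\<lambda>x. (v x)^2) UNIV"
    using assms(1) unfolding square_summable_def by (intro infsum_mono_neutral) auto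
  also have "\<dots> = (l2norm v)^2"
    by (simp add: l2norm_square)
  finally have "(v x0)^2 \<le> (l2norm v)^2" .
  then have "l2norm v \<noteq> 0"
    using x0 by (metis order_less_le_trans zero_less_power2)
  then show ?thesis
    using l2norm_nonneg[of v] by simp
qed

lemma l2inner_commute: "l2inner v w = l2inner w v"
  unfolding l2inner_def by (simp add: mult.commute)

lemma l2inner_self: "l2inner v v = (l2norm v)^2"
  unfolding l2inner_def l2norm_square by (simp add: power2_eq_square)

lemma l2inner_zero_left: "l2inner (\<lambda>_. 0) w = 0"
  unfolding l2inner_def by simp

lemma l2inner_lincomb_left:
  assumes "square_summable u" "square_summable v" "square_summable w"
  shows "l2inner (\<lambda>x. u x + t * v x) w = l2inner u w + t * l2inner v w"
proof -
  have "l2inner (\<lambda>x. u x + t * v x) w = infsum (\<lambda>x. u x * w x + t * (v x * w x)) UNIV"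
    unfolding l2inner_def by (simp add: algebra_simps)
  also have "\<dots> = l2inner u w + t * l2inner v w"
    unfolding l2inner_def
    using square_summable_imp_summable_mult[OF assms(1,3)] square_summable_imp_summable_mult[OF assms(2,3)]
    by (simp add: infsum_add summable_on_cmult_right infsum_cmult_right')
  finally show ?thesis .
qed

lemma l2inner_lincomb_right:
  "square_summable u \<Longrightarrow> square_summable v \<Longrightarrow> square_summable w \<Longrightarrow>
    l2inner w (\<lambda>x. u x + t * v x) = l2inner w u + t * l2inner w v"
  unfolding l2inner_commute[of w] by (rule l2inner_lincomb_left)

lemma l2inner_lincomb_self:
  assumes v: "square_summable v" and w: "square_summable w"
  shows "l2inner (\<lambda>x. v x + t * w x) (\<lambda>x. v x + t * w x)
    = l2inner v v + 2 * t * l2inner v w + t^2 * l2inner w w"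
proof -
  have p: "square_summable (\<lambda>x. v x + t * w x)"
    using v w by (rule square_summable_lincomb)
  show ?thesis
    unfolding l2inner_lincomb_left[OF v w p] l2inner_lincomb_right[OF v w v]
      l2inner_lincomb_right[OF v w w] l2inner_commute[of w v]
    by (simp add: algebra_simps power2_eq_square)
qed

lemma nonneg_quadratic_imp_discriminant_le:
  fixes a b c :: real
  assumes nonneg: "\<And>t. 0 \<le> a + 2 * t * b + t^2 * c" and "0 \<le> c"
  shows "b^2 \<le> a * c"
proof (cases "c = 0")
  case True
  have "0 \<le> a + 2 * (- (a + 1) / (2 * b)) * b" if "b \<noteq> 0"
    using nonneg[of "- (a + 1) / (2 * b)"] True by simp
  then have "b = 0"
    by (cases "b = 0") (simp_all add: field_simps)
  then show ?thesis
    using True by simp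
next
  case False
  then have c: "0 < c"
    using \<open>0 \<le> c\<close> by simp
  have "0 \<le> a + 2 * (- b / c) * b + (- b / c)^2 * c"
    by (rule nonneg)
  also have "\<dots> = a - b^2 / c"
    using c by (simp add: field_simps power2_eq_square)
  finally show ?thesis
    using c by (simp add: field_simps)
qed

lemma two_mult_le_add_if_square_le_mult:
  fixes b p q :: real
  assumes "b^2 \<le> p * q" "0 \<le> p" "0 \<le> q"
  shows "2 * b \<le> p + q"
proof -
  have "0 \<le> (p - q)^2"
    by simp
  then have "4 * (p * q) \<le> (p + q)^2"
    by (simp add: power2_eq_square algebra_simps)
  then have "(2 * b)^2 \<le> (p + q)^2"
    using assms(1) by (simp add: power_mult_distrib)
  then have "\<bar>2 * b\<bar> \<le> \<bar>p + q\<bar>"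
    by (simp only: abs_le_square_iff)
  then show ?thesis
    using assms(2,3) by simp
qed

lemma l2inner_Cauchy_Schwarz:
  assumes v: "square_summable v" and w: "square_summable w"
  shows "\<bar>l2inner v w\<bar> \<le> l2norm v * l2norm w"
proof -
  have "(l2inner v w)^2 \<le> l2inner v v * l2inner w w"
  proof (rule nonneg_quadratic_imp_discriminant_le)
    fix t
    have "0 \<le> l2inner (\<lambda>x. v x + t * w x) (\<lambda>x. v x + t * w x)"
      by (simp add: l2inner_self)
    then show "0 \<le> l2inner v v + 2 * t * l2inner v w + t^2 * l2inner w w"
      unfolding l2inner_lincomb_self[OF v w] .
  qed (simp add: l2inner_self)
  then have "\<bar>l2inner v w\<bar>^2 \<le> (l2norm v * l2norm w)^2"
    by (simp only: power2_abs l2inner_self power_mult_distrib)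
  then show ?thesis
    by (rule power2_le_imp_le) (simp add: l2norm_nonneg)
qed

lemma l2norm_triangle_lincomb:
  assumes v: "square_summable v" and w: "square_summable w"
  shows "l2norm (\<lambda>x. v x + t * w x) \<le> l2norm v + \<bar>t\<bar> * l2norm w"
proof -
  have "(l2norm (\<lambda>x. v x + t * w x))^2 = l2inner v v + 2 * t * l2inner v w + t^2 * l2inner w w"
    unfolding l2inner_self[symmetric] by (rule l2inner_lincomb_self[OF v w])
  also have "\<dots> \<le> (l2norm v)^2 + 2 * \<bar>t\<bar> * (l2norm v * l2norm w) + \<bar>t\<bar>^2 * (l2norm w)^2"
  proof -
    have "t * l2inner v w \<le> \<bar>t\<bar> * \<bar>l2inner v w\<bar>"
      by (metis abs_ge_self abs_mult)
    also have "\<dots> \<le> \<bar>t\<bar> * (l2norm v * l2norm w)"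
      using l2inner_Cauchy_Schwarz[OF v w] by (simp add: mult_left_mono)
    finally have "t * l2inner v w \<le> \<bar>t\<bar> * (l2norm v * l2norm w)" .
    then show ?thesis
      by (simp only: l2inner_self power2_abs)
  qed
  also have "\<dots> = (l2norm v + \<bar>t\<bar> * l2norm w)^2"
    by (simp add: power2_sum power_mult_distrib algebra_simps)
  finally show ?thesis
    by (rule power2_le_imp_le) (simp add: l2norm_nonneg)
qed

section \<open>Symmetric positive operators\<close>

locale psd_operator =
  fixes H :: "'b set" and B :: "('b \<Rightarrow> real) \<Rightarrow> ('b \<Rightarrow> real)"
  assumes maps_l2: "is_l2 H v \<Longrightarrow> is_l2 H (B v)"
    and lincomb: "is_l2 H v \<Longrightarrow> is_l2 H w \<Longrightarrow> B (\<lambda>x. v x + t * w x) = (\<lambda>x. B v x + t * B w x)"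
    and symmetric: "is_l2 H v \<Longrightarrow> is_l2 H w \<Longrightarrow> l2inner (B v) w = l2inner v (B w)"
    and form_nonneg: "is_l2 H v \<Longrightarrow> 0 \<le> l2inner (B v) v"
begin

lemma form_lincomb:
  assumes v: "is_l2 H v" and w: "is_l2 H w"
  shows "l2inner (B (\<lambda>x. v x + t * w x)) (\<lambda>x. v x + t * w x)
    = l2inner (B v) v + 2 * t * l2inner (B v) w + t^2 * l2inner (B w) w"
proof -
  have sv: "square_summable v" and sw: "square_summable w"
    using v w by (simp_all add: is_l2_imp_square_summable)
  have sBv: "square_summable (B v)" and sBw: "square_summable (B w)"
    using v w by (simp_all add: is_l2_imp_square_summable[OF maps_l2])
  have sp: "square_summable (\<lambda>x. v x + t * w x)"
    using sv sw by (rule square_summable_lincomb)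
  have "l2inner (B w) v = l2inner (B v) w"
    using symmetric[OF w v] l2inner_commute by metis
  then show ?thesis
    unfolding lincomb[OF v w] l2inner_lincomb_left[OF sBv sBw sp]
      l2inner_lincomb_right[OF sv sw sBv] l2inner_lincomb_right[OF sv sw sBw]
    by (simp add: algebra_simps power2_eq_square)
qed

lemma form_Cauchy_Schwarz:
  assumes v: "is_l2 H v" and w: "is_l2 H w"
  shows "(l2inner (B v) w)^2 \<le> l2inner (B v) v * l2inner (B w) w"
proof (rule nonneg_quadratic_imp_discriminant_le)
  show "0 \<le> l2inner (B v) v + 2 * t * l2inner (B v) w + t^2 * l2inner (B w) w" for t
    using form_nonneg[OF is_l2_lincomb[OF v w, of t]] form_lincomb[OF v w, of t] by simp
qed (rule form_nonneg[OF w])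

lemma l2norm_apply_square_le_form:
  assumes v: "is_l2 H v" and bound: "\<And>y. is_l2 H y \<Longrightarrow> l2inner (B y) y \<le> M * (l2norm y)^2"
  shows "(l2norm (B v))^2 \<le> M * l2inner (B v) v"
proof (cases "B v = (\<lambda>_. 0)")
  case True
  then show ?thesis
    by (simp add: l2norm_zero l2inner_zero_left)
next
  case False
  have Bv: "is_l2 H (B v)"
    using v by (rule maps_l2)
  have pos: "0 < (l2norm (B v))^2"
    using l2norm_pos[OF is_l2_imp_square_summable[OF Bv] False] by simp
  have "((l2norm (B v))^2)^2 = (l2inner (B v) (B v))^2"
    by (simp add: l2inner_self)
  also have "\<dots> \<le> l2inner (B v) v * l2inner (B (B v)) (B v)"
    using form_Cauchy_Schwarz[OF v Bv] .
  also have "\<dots> \<le> l2inner (B v) v * (M * (l2norm (B v))^2)"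
    using bound[OF Bv] form_nonneg[OF v] by (rule mult_left_mono)
  finally have "(l2norm (B v))^2 * (l2norm (B v))^2 \<le> (M * l2inner (B v) v) * (l2norm (B v))^2"
    by (simp add: power2_eq_square[of "(l2norm (B v))^2"] mult_ac)
  then show ?thesis
    using pos by (rule mult_right_le_imp_le)
qed

end

locale spd_operator =
  fixes H :: "'b set" and A :: "('b \<Rightarrow> real) \<Rightarrow> ('b \<Rightarrow> real)"
  assumes bounded_spd: "bounded_spd H A"
    and nonempty: "H \<noteq> {}" \<comment> \<open>excludes the junk value \<open>Sup {}\<close> in \<open>opnorm\<close> and \<open>invnorm\<close>\<close>
begin

lemma coercive: obtains c where "0 < c" "\<And>v. is_l2 H v \<Longrightarrow> c * (l2norm v)^2 \<le> l2inner (A v) v"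
  using bounded_spd unfolding bounded_spd_def by blast

sublocale psd_operator H A
proof
  show "is_l2 H v \<Longrightarrow> is_l2 H (A v)" for v
    using bounded_spd unfolding bounded_spd_def by blast
  show "A (\<lambda>x. v x + t * w x) = (\<lambda>x. A v x + t * A w x)" if v: "is_l2 H v" and w: "is_l2 H w" for v w t
  proof -
    have add: "A (\<lambda>x. v x + w' x) = (\<lambda>x. A v x + A w' x)" if "is_l2 H w'" for w'
      using bounded_spd v that unfolding bounded_spd_def by blast
    have scale: "A (\<lambda>x. t * w x) = (\<lambda>x. t * A w x)"
      using bounded_spd w unfolding bounded_spd_def by blast
    show ?thesis
      using add[OF is_l2_lincomb[OF is_l2_zero w, of t]] scale by simp
  qed
  show "is_l2 H v \<Longrightarrow> is_l2 H w \<Longrightarrow> l2inner (A v) w = l2inner v (A w)" for v w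
    using bounded_spd unfolding bounded_spd_def by blast
  show "0 \<le> l2inner (A v) v" if "is_l2 H v" for v
  proof -
    obtain c where c: "0 < c" "\<And>v. is_l2 H v \<Longrightarrow> c * (l2norm v)^2 \<le> l2inner (A v) v"
      using coercive by blast
    have "0 \<le> c * (l2norm v)^2"
      using c(1) by simp
    also have "\<dots> \<le> l2inner (A v) v"
      using c(2)[OF that] .
    finally show ?thesis .
  qed
qed

lemma apply_diff: "is_l2 H v \<Longrightarrow> is_l2 H w \<Longrightarrow> A (\<lambda>x. v x - w x) = (\<lambda>x. A v x - A w x)"
  using lincomb[of v w "-1"] by simp

lemma apply_zero: "A (\<lambda>_. 0) = (\<lambda>_. 0)"
  using lincomb[OF is_l2_zero is_l2_zero, of 1] by (simp add: fun_eq_iff)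

lemma form_le_norms: "is_l2 H v \<Longrightarrow> l2inner (A v) v \<le> l2norm (A v) * l2norm v"
  using l2inner_Cauchy_Schwarz[OF is_l2_imp_square_summable[OF maps_l2] is_l2_imp_square_summable]
  by fastforce

lemma nonzero_l2_exists: obtains v where "is_l2 H v" "v \<noteq> (\<lambda>_. 0)"
proof -
  obtain x0 where "x0 \<in> H"
    using nonempty by blast
  then have "is_l2 H (\<lambda>x. if x = x0 then 1 else 0)"
    unfolding is_l2_def
    by (subst summable_on_cong_neutral[of "{x0}"]) auto
  moreover have "(\<lambda>x. if x = x0 then 1 else 0 :: real) \<noteq> (\<lambda>_. 0)"
    by (metis one_neq_zero)
  ultimately show ?thesis
    using that by blast
qed

lemma l2norm_apply_lower: obtains c where "0 < c" "\<And>v. is_l2 H v \<Longrightarrow> c * l2norm v \<le> l2norm (A v)"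
proof -
  obtain c where c: "0 < c" "\<And>v. is_l2 H v \<Longrightarrow> c * (l2norm v)^2 \<le> l2inner (A v) v"
    using coercive by blast
  have "c * l2norm v \<le> l2norm (A v)" if v: "is_l2 H v" for v
  proof (cases "l2norm v = 0")
    case False
    then have "0 < l2norm v"
      using l2norm_nonneg[of v] by simp
    moreover have "c * l2norm v * l2norm v \<le> l2norm (A v) * l2norm v"
      using c(2)[OF v] form_le_norms[OF v] by (simp add: power2_eq_square)
    ultimately show ?thesis
      by simp
  qed (simp add: l2norm_nonneg)
  then show ?thesis
    using that c(1) by blast
qed

lemma l2norm_apply_le_opnorm:
  assumes v: "is_l2 H v"
  shows "l2norm (A v) \<le> opnorm H A * l2norm v"
proof (cases "v = (\<lambda>_. 0)")
  case False
  obtain M where M: "\<And>v. is_l2 H v \<Longrightarrow> l2norm (A v) \<le> M * l2norm v"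
    using bounded_spd unfolding bounded_spd_def by blast
  have "bdd_above {l2norm (A v) / l2norm v | v. is_l2 H v \<and> v \<noteq> (\<lambda>_. 0)}"
  proof (rule bdd_aboveI, clarify)
    fix w assume w: "is_l2 H w" "w \<noteq> (\<lambda>_. 0)"
    show "l2norm (A w) / l2norm w \<le> M"
      using M[OF w(1)] l2norm_pos[OF is_l2_imp_square_summable[OF w(1)] w(2)]
      by (simp add: divide_le_eq)
  qed
  then have "l2norm (A v) / l2norm v \<le> opnorm H A"
    unfolding opnorm_def using v False by (intro cSup_upper) auto
  then show ?thesis
    using l2norm_pos[OF is_l2_imp_square_summable[OF v] False] by (simp add: divide_le_eq mult.commute)
qed (simp add: apply_zero l2norm_zero)

lemma l2norm_apply_pos:
  assumes v: "is_l2 H v" "v \<noteq> (\<lambda>_. 0)"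
  shows "0 < l2norm (A v)"
proof -
  obtain c where c: "0 < c" "\<And>v. is_l2 H v \<Longrightarrow> c * l2norm v \<le> l2norm (A v)"
    using l2norm_apply_lower by blast
  have "0 < c * l2norm v"
    using c(1) l2norm_pos[OF is_l2_imp_square_summable[OF v(1)] v(2)] by simp
  also have "\<dots> \<le> l2norm (A v)"
    using c(2)[OF v(1)] .
  finally show ?thesis .
qed

lemma l2norm_le_invnorm:
  assumes v: "is_l2 H v"
  shows "l2norm v \<le> invnorm H A * l2norm (A v)"
proof (cases "v = (\<lambda>_. 0)")
  case False
  obtain c where c: "0 < c" "\<And>v. is_l2 H v \<Longrightarrow> c * l2norm v \<le> l2norm (A v)"
    using l2norm_apply_lower by blast
  have "bdd_above {l2norm v / l2norm (A v) | v. is_l2 H v \<and> v \<noteq> (\<lambda>_. 0)}"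
  proof (rule bdd_aboveI, clarify)
    fix w assume w: "is_l2 H w" "w \<noteq> (\<lambda>_. 0)"
    show "l2norm w / l2norm (A w) \<le> 1 / c"
      using c l2norm_apply_pos[OF w] c(2)[OF w(1)] by (simp add: divide_le_eq field_simps)
  qed
  then have "l2norm v / l2norm (A v) \<le> invnorm H A"
    unfolding invnorm_def using v False by (intro cSup_upper) auto
  then show ?thesis
    using l2norm_apply_pos[OF v False] by (simp add: divide_le_eq mult.commute)
qed (simp add: apply_zero l2norm_zero)

lemma opnorm_pos: "0 < opnorm H A"
  and invnorm_pos: "0 < invnorm H A"
proof -
  obtain v where v: "is_l2 H v" "v \<noteq> (\<lambda>_. 0)"
    using nonzero_l2_exists by blast
  have "0 < l2norm v"
    using l2norm_pos[OF is_l2_imp_square_summable[OF v(1)] v(2)] .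
  moreover have "0 < l2norm (A v)"
    using l2norm_apply_pos[OF v] .
  ultimately have "0 < opnorm H A * l2norm v" and "0 < invnorm H A * l2norm (A v)"
    using l2norm_apply_le_opnorm[OF v(1)] l2norm_le_invnorm[OF v(1)] by linarith+
  with \<open>0 < l2norm v\<close> \<open>0 < l2norm (A v)\<close> show "0 < opnorm H A" "0 < invnorm H A"
    by (simp_all add: zero_less_mult_iff)
qed

lemma form_le_opnorm:
  assumes v: "is_l2 H v"
  shows "l2inner (A v) v \<le> opnorm H A * (l2norm v)^2"
proof -
  have "l2inner (A v) v \<le> l2norm (A v) * l2norm v"
    using form_le_norms[OF v] .
  also have "\<dots> \<le> opnorm H A * l2norm v * l2norm v"
    using l2norm_apply_le_opnorm[OF v] l2norm_nonneg[of v] by (rule mult_right_mono)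
  finally show ?thesis
    by (simp add: power2_eq_square mult.assoc)
qed

lemma l2norm_apply_square_le_opnorm:
  assumes "is_l2 H v"
  shows "(l2norm (A v))^2 \<le> opnorm H A * l2inner (A v) v"
  using l2norm_apply_square_le_form[OF assms form_le_opnorm] .

definition rayleigh_inf :: real where
  "rayleigh_inf = Inf {l2inner (A v) v / (l2norm v)^2 | v. is_l2 H v \<and> v \<noteq> (\<lambda>_. 0)}"

lemma rayleigh_inf_nonneg: "0 \<le> rayleigh_inf"
  and rayleigh_inf_le_form: "is_l2 H v \<Longrightarrow> rayleigh_inf * (l2norm v)^2 \<le> l2inner (A v) v"
proof -
  let ?R = "{l2inner (A v) v / (l2norm v)^2 | v. is_l2 H v \<and> v \<noteq> (\<lambda>_. 0)}"
  have R_nonneg: "0 \<le> r" if "r \<in> ?R" for r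
    using that form_nonneg by auto
  show "0 \<le> rayleigh_inf"
    unfolding rayleigh_inf_def using nonzero_l2_exists R_nonneg by (intro cInf_greatest) blast+
  assume v: "is_l2 H v"
  show "rayleigh_inf * (l2norm v)^2 \<le> l2inner (A v) v"
  proof (cases "v = (\<lambda>_. 0)")
    case False
    have "rayleigh_inf \<le> l2inner (A v) v / (l2norm v)^2"
      unfolding rayleigh_inf_def using v False R_nonneg by (intro cInf_lower bdd_belowI) blast+
    then show ?thesis
      using l2norm_pos[OF is_l2_imp_square_summable[OF v] False] by (simp add: le_divide_eq)
  qed (simp add: l2norm_zero l2inner_zero_left apply_zero)
qed

lemma psd_operator_shift:
  assumes m: "\<And>v. is_l2 H v \<Longrightarrow> m * (l2norm v)^2 \<le> l2inner (A v) v"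
  shows "psd_operator H (\<lambda>v x. A v x - m * v x)"
proof
  fix v w :: "'b \<Rightarrow> real" and t :: real
  assume v: "is_l2 H v"
  have sv: "square_summable v" and sAv: "square_summable (A v)"
    using v by (simp_all add: is_l2_imp_square_summable is_l2_imp_square_summable[OF maps_l2])
  show "is_l2 H (\<lambda>x. A v x - m * v x)"
    using is_l2_lincomb[OF maps_l2[OF v] v, of "- m"] by simp
  show "0 \<le> l2inner (\<lambda>x. A v x - m * v x) v"
    using l2inner_lincomb_left[OF sAv sv sv, of "- m"] m[OF v] by (simp add: l2inner_self)
  assume w: "is_l2 H w"
  have sw: "square_summable w" and sAw: "square_summable (A w)"
    using w by (simp_all add: is_l2_imp_square_summable is_l2_imp_square_summable[OF maps_l2])
  show "(\<lambda>x. A (\<lambda>x. v x + t * w x) x - m * (v x + t * w x))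
      = (\<lambda>x. A v x - m * v x + t * (A w x - m * w x))"
    by (simp add: lincomb[OF v w] algebra_simps)
  show "l2inner (\<lambda>x. A v x - m * v x) w = l2inner v (\<lambda>x. A w x - m * w x)"
    using l2inner_lincomb_left[OF sAv sv sw, of "- m"] l2inner_lincomb_right[OF sAw sw sv, of "- m"]
      symmetric[OF v w]
    by simp
qed

lemma l2norm_shifted_apply_square_le:
  assumes v: "is_l2 H v" and "0 \<le> m" and m: "\<And>y. is_l2 H y \<Longrightarrow> m * (l2norm y)^2 \<le> l2inner (A y) y"
  shows "(l2norm (\<lambda>x. A v x - m * v x))^2 \<le> opnorm H A * (l2inner (A v) v - m * (l2norm v)^2)"
proof -
  interpret shifted: psd_operator H "\<lambda>v x. A v x - m * v x"
    using m by (rule psd_operator_shift)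
  have shifted_form: "l2inner (\<lambda>x. A y x - m * y x) y = l2inner (A y) y - m * (l2norm y)^2"
    if y: "is_l2 H y" for y
    using l2inner_lincomb_left[of "A y" y y "- m"] y
    by (simp add: l2inner_self is_l2_imp_square_summable is_l2_imp_square_summable[OF maps_l2])
  have "(l2norm (\<lambda>x. A v x - m * v x))^2 \<le> opnorm H A * l2inner (\<lambda>x. A v x - m * v x) v"
  proof (rule shifted.l2norm_apply_square_le_form[OF v])
    fix y assume y: "is_l2 H y"
    have "0 \<le> m * (l2norm y)^2"
      using \<open>0 \<le> m\<close> by simp
    then show "l2inner (\<lambda>x. A y x - m * y x) y \<le> opnorm H A * (l2norm y)^2"
      using shifted_form[OF y] form_le_opnorm[OF y] by linarith
  qed
  then show ?thesis
    using shifted_form[OF v] by simp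
qed

lemma rayleigh_inf_less_imp:
  assumes "rayleigh_inf < q"
  obtains v where "is_l2 H v" "v \<noteq> (\<lambda>_. 0)" "l2inner (A v) v < q * (l2norm v)^2"
proof -
  let ?R = "{l2inner (A v) v / (l2norm v)^2 | v. is_l2 H v \<and> v \<noteq> (\<lambda>_. 0)}"
  have "?R \<noteq> {}"
    using nonzero_l2_exists by blast
  then have "\<exists>r\<in>?R. r < q"
    using assms unfolding rayleigh_inf_def by (rule cInf_lessD)
  then obtain v where v: "is_l2 H v" "v \<noteq> (\<lambda>_. 0)" and "l2inner (A v) v / (l2norm v)^2 < q"
    by blast
  moreover have "0 < (l2norm v)^2"
    using l2norm_pos[OF is_l2_imp_square_summable[OF v(1)] v(2)] by simp
  ultimately show ?thesis
    using that by (simp add: divide_less_eq)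
qed

text \<open>If the Rayleigh quotient came close to some \<open>m < 1 / invnorm H A\<close>, the energy inequality
  for the positive operator \<open>A - m\<close> would make \<open>\<parallel>(A - m) v\<parallel>\<close> small, contradicting
  \<open>\<parallel>A v\<parallel> \<ge> \<parallel>v\<parallel> / invnorm H A\<close>.\<close>

lemma rayleigh_inf_ge_inverse_invnorm: "1 / invnorm H A \<le> rayleigh_inf"
proof (rule ccontr)
  define \<mu> where "\<mu> = 1 / invnorm H A"
  define m where "m = rayleigh_inf"
  define \<epsilon> where "\<epsilon> = (\<mu> - m) / 2"
  define K where "K = opnorm H A"
  assume "\<not> 1 / invnorm H A \<le> rayleigh_inf"
  then have "m < \<mu>" and "0 < \<epsilon>" and "0 < K"
    unfolding m_def \<mu>_def \<epsilon>_def K_def using opnorm_pos by simp_all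
  then obtain v where v: "is_l2 H v" "v \<noteq> (\<lambda>_. 0)"
    and v_quotient: "l2inner (A v) v < (m + \<epsilon>^2 / K) * (l2norm v)^2"
    unfolding m_def by (metis rayleigh_inf_less_imp less_add_same_cancel1 divide_pos_pos zero_less_power)
  have v_pos: "0 < l2norm v"
    using l2norm_pos[OF is_l2_imp_square_summable[OF v(1)] v(2)] .
  have "(l2norm (\<lambda>x. A v x - m * v x))^2 \<le> K * (l2inner (A v) v - m * (l2norm v)^2)"
    unfolding K_def m_def using v(1) rayleigh_inf_nonneg rayleigh_inf_le_form
    by (rule l2norm_shifted_apply_square_le)
  also have "\<dots> < K * (\<epsilon>^2 / K * (l2norm v)^2)"
    using v_quotient \<open>0 < K\<close> by (intro mult_strict_left_mono) (simp_all add: algebra_simps)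
  also have "\<dots> = (\<epsilon> * l2norm v)^2"
    using \<open>0 < K\<close> by (simp add: power_mult_distrib)
  finally have "l2norm (\<lambda>x. A v x - m * v x) < \<epsilon> * l2norm v"
    by (rule power_less_imp_less_base) (use \<open>0 < \<epsilon>\<close> v_pos in simp)
  moreover have "\<mu> * l2norm v \<le> l2norm (A v)"
    using l2norm_le_invnorm[OF v(1)] invnorm_pos unfolding \<mu>_def by (simp add: field_simps)
  moreover have "l2norm (A v) \<le> l2norm (\<lambda>x. A v x - m * v x) + m * l2norm v"
  proof -
    have "is_l2 H (\<lambda>x. A v x - m * v x)"
      using is_l2_lincomb[OF maps_l2[OF v(1)] v(1), of "- m"] by simp
    then show ?thesis
      using l2norm_triangle_lincomb[of "\<lambda>x. A v x - m * v x" v m] v(1) rayleigh_inf_nonneg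
      by (simp add: is_l2_imp_square_summable m_def)
  qed
  ultimately show False
    using l2norm_nonneg[of "\<lambda>x. A v x - m * v x"] unfolding \<epsilon>_def by (simp add: field_simps)
qed

lemma l2norm_square_le_invnorm_form:
  assumes v: "is_l2 H v"
  shows "(l2norm v)^2 \<le> invnorm H A * l2inner (A v) v"
proof -
  have "(l2norm v)^2 = invnorm H A * (1 / invnorm H A * (l2norm v)^2)"
    using invnorm_pos by simp
  also have "\<dots> \<le> invnorm H A * (rayleigh_inf * (l2norm v)^2)"
    using rayleigh_inf_ge_inverse_invnorm invnorm_pos by (intro mult_left_mono mult_right_mono) auto
  also have "\<dots> \<le> invnorm H A * l2inner (A v) v"
    using rayleigh_inf_le_form[OF v] invnorm_pos by (intro mult_left_mono) auto
  finally show ?thesis .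
qed

lemma cross_term_le_restricted:
  assumes e: "is_l2 H e" and z: "is_l2 H z" and z_supp: "\<forall>x. x \<notin> P \<longrightarrow> z x = 0"
  shows "2 * l2inner (A e) z - l2inner (A z) z \<le> invnorm H A * (l2norm (Rset P (A e)))^2"
proof -
  define N where "N = l2norm (Rset P (A e))"
  have "l2inner (A e) z = l2inner (Rset P (A e)) z"
    unfolding l2inner_def using z_supp by (intro infsum_cong) (simp add: Rset_def)
  then have "(l2inner (A e) z)^2 \<le> N^2 * (l2norm z)^2"
    using l2inner_Cauchy_Schwarz[OF is_l2_imp_square_summable is_l2_imp_square_summable, of H "Rset P (A e)" H z]
      is_l2_Rset[OF maps_l2[OF e]] z
    by (simp add: N_def power_mult_distrib[symmetric] abs_le_square_iff[symmetric] l2norm_nonneg)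
  also have "\<dots> \<le> N^2 * (invnorm H A * l2inner (A z) z)"
    using l2norm_square_le_invnorm_form[OF z] by (rule mult_left_mono) simp
  finally have "2 * l2inner (A e) z \<le> invnorm H A * N^2 + l2inner (A z) z"
    using form_nonneg[OF z] invnorm_pos
    by (intro two_mult_le_add_if_square_le_mult) (simp_all add: mult_ac)
  then show ?thesis
    unfolding N_def by simp
qed

text \<open>The energy of \<open>e = w - u\<close> splits along \<open>z = w - v\<close> as
  \<open>\<langle>A (v - u), v - u\<rangle> + (2 \<langle>A e, z\<rangle> - \<langle>A z, z\<rangle>)\<close>: the first part is controlled by the
  approximation hypothesis, the second, since \<open>z\<close> lives on \<open>P\<close>, by the residual on \<open>P\<close>.\<close>

lemma residual_square_le_restricted_residual:
  assumes u: "is_l2 H u" and w: "is_l2 H w" and v: "is_l2 H v"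
    and w_supp: "\<forall>x. x \<notin> P \<longrightarrow> w x = 0" and v_supp: "\<forall>x. x \<notin> P \<longrightarrow> v x = 0"
    and v_approx: "opnorm H A * (l2norm (\<lambda>x. u x - v x))^2 \<le> lam^2 * (l2norm (\<lambda>x. A w x - A u x))^2"
  shows "(1 - opnorm H A * lam^2) * (l2norm (\<lambda>x. A w x - A u x))^2
    \<le> cond_number H A * (l2norm (Rset P (\<lambda>x. A w x - A u x)))^2"
proof -
  define K where "K = opnorm H A"
  define r where "r = (\<lambda>x. A w x - A u x)"
  define e where "e = (\<lambda>x. w x - u x)"
  define z where "z = (\<lambda>x. w x - v x)"
  have e: "is_l2 H e" and z: "is_l2 H z"
    unfolding e_def z_def using u v w by (simp_all add: is_l2_diff)
  have Ae: "A e = r"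
    unfolding e_def r_def using w u by (rule apply_diff)
  have "(\<lambda>x. e x + (-1) * z x) = (\<lambda>x. v x - u x)"
    unfolding e_def z_def by auto
  then have energy_split: "l2inner (A e) e
    = l2inner (A (\<lambda>x. v x - u x)) (\<lambda>x. v x - u x) + (2 * l2inner (A e) z - l2inner (A z) z)"
    using form_lincomb[OF e z, of "-1"] by simp
  have "l2inner (A (\<lambda>x. v x - u x)) (\<lambda>x. v x - u x) \<le> K * (l2norm (\<lambda>x. u x - v x))^2"
    unfolding K_def l2norm_diff_commute[of u] using u v by (simp add: is_l2_diff form_le_opnorm)
  also have "\<dots> \<le> lam^2 * (l2norm r)^2"
    using v_approx unfolding K_def r_def .
  finally have approx: "l2inner (A (\<lambda>x. v x - u x)) (\<lambda>x. v x - u x) \<le> lam^2 * (l2norm r)^2" .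
  have "\<forall>x. x \<notin> P \<longrightarrow> z x = 0"
    unfolding z_def using w_supp v_supp by simp
  then have cross: "2 * l2inner (A e) z - l2inner (A z) z \<le> invnorm H A * (l2norm (Rset P r))^2"
    using cross_term_le_restricted[OF e z] unfolding Ae by blast
  have "l2inner (A e) e \<le> lam^2 * (l2norm r)^2 + invnorm H A * (l2norm (Rset P r))^2"
    using energy_split approx cross by linarith
  then have "K * l2inner (A e) e \<le> K * (lam^2 * (l2norm r)^2 + invnorm H A * (l2norm (Rset P r))^2)"
    using opnorm_pos unfolding K_def by (intro mult_left_mono) simp_all
  moreover have "(l2norm r)^2 \<le> K * l2inner (A e) e"
    unfolding K_def using l2norm_apply_square_le_opnorm[OF e] Ae by simp
  ultimately show ?thesis
    unfolding cond_number_def K_def r_def by (simp add: algebra_simps)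
qed

lemma alpha_residual_le_restricted_residual:
  assumes u: "is_l2 H u" and w: "is_l2 H w" and v: "is_l2 H v"
    and w_supp: "\<forall>x. x \<notin> P \<longrightarrow> w x = 0" and v_supp: "\<forall>x. x \<notin> P \<longrightarrow> v x = 0"
    and v_approx: "opnorm H A * (l2norm (\<lambda>x. u x - v x))^2 \<le> lam^2 * (l2norm (\<lambda>x. A w x - A u x))^2"
    and alpha: "\<alpha> \<le> (1 / sqrt (cond_number H A)) * sqrt (1 - opnorm H A * lam^2)"
  shows "\<alpha> * l2norm (\<lambda>x. A w x - A u x) \<le> l2norm (Rset P (\<lambda>x. A w x - A u x))"
proof (cases "\<alpha> \<le> 0")
  case True
  then show ?thesis
    using mult_nonpos_nonneg[OF True l2norm_nonneg, of "\<lambda>x. A w x - A u x"]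
      l2norm_nonneg[of "Rset P (\<lambda>x. A w x - A u x)"] by linarith
next
  case False
  define R where "R = l2norm (\<lambda>x. A w x - A u x)"
  define N where "N = l2norm (Rset P (\<lambda>x. A w x - A u x))"
  define \<kappa> where "\<kappa> = cond_number H A"
  define d where "d = 1 - opnorm H A * lam^2"
  have "0 < \<kappa>"
    unfolding \<kappa>_def cond_number_def using opnorm_pos invnorm_pos by simp
  have "0 < sqrt d / sqrt \<kappa>"
    using False alpha unfolding d_def \<kappa>_def by simp
  then have "0 < d"
    using \<open>0 < \<kappa>\<close> by (simp add: zero_less_divide_iff)
  have "\<alpha>^2 \<le> (sqrt d / sqrt \<kappa>)^2"
    using alpha False unfolding d_def \<kappa>_def by (intro power_mono) simp_all
  also have "\<dots> = d / \<kappa>"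
    using \<open>0 < d\<close> \<open>0 < \<kappa>\<close> by (simp add: power_divide)
  finally have "\<alpha>^2 * R^2 \<le> d / \<kappa> * R^2"
    by (rule mult_right_mono) simp
  then have "(\<alpha> * R)^2 \<le> d * R^2 / \<kappa>"
    by (simp add: power_mult_distrib)
  also have "\<dots> \<le> N^2"
    using residual_square_le_restricted_residual[OF assms(1-6)] \<open>0 < \<kappa>\<close>
    unfolding d_def \<kappa>_def R_def N_def by (simp add: divide_le_eq mult.commute)
  finally show ?thesis
    unfolding R_def N_def by (rule power2_le_imp_le) (simp add: l2norm_nonneg)
qed

end

section \<open>Contractions and approximation classes\<close>

lemma infsum_le_sum_infsum_cover:
  fixes f :: "'a \<Rightarrow> real"
  assumes "finite I" and f_nonneg: "\<And>x. 0 \<le> f x" and f_summable: "f summable_on UNIV"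
    and "B \<subseteq> (\<Union>i\<in>I. S i)"
  shows "infsum f B \<le> (\<Sum>i\<in>I. infsum f (S i))"
  using assms(1,4)
proof (induction I arbitrary: B rule: finite_induct)
  case (insert i I)
  have summable: "f summable_on X" for X
    using f_summable by (rule summable_on_subset_banach) simp
  have "infsum f B = infsum f (B \<inter> S i) + infsum f (B - S i)"
    using infsum_Un_disjoint[OF summable summable, of "B \<inter> S i" "B - S i"]
    by (simp add: Int_Diff_Un Int_Diff_disjoint)
  also have "infsum f (B \<inter> S i) \<le> infsum f (S i)"
    using summable f_nonneg by (intro infsum_mono2) auto
  also have "infsum f (B - S i) \<le> (\<Sum>i\<in>I. infsum f (S i))"
    using insert.prems by (intro insert.IH) auto
  finally show ?case
    using insert.hyps by simp
qed simp

lemma infsum_over_fibres: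
  fixes f :: "'a \<Rightarrow> 'c::banach"
  assumes "f summable_on {x \<in> S. g x \<in> X}"
  shows "infsum (\<lambda>n. infsum f {x \<in> S. g x = n}) X = infsum f {x \<in> S. g x \<in> X}"
proof -
  let ?\<Sigma> = "Sigma X (\<lambda>n. {x \<in> S. g x = n})"
  have inj: "inj_on snd ?\<Sigma>"
    by (auto simp: inj_on_def)
  have image: "snd ` ?\<Sigma> = {x \<in> S. g x \<in> X}"
    by force
  have eq: "(\<lambda>(n, x). f x) = f \<circ> snd"
    by auto
  have "(\<lambda>(n, x). f x) summable_on ?\<Sigma>"
    unfolding eq using assms summable_on_reindex[OF inj, of f] image by simp
  then have "infsum (\<lambda>n. infsum f {x \<in> S. g x = n}) X = infsum (\<lambda>(n, x). f x) ?\<Sigma>"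
    by (rule infsum_Sigma'_banach)
  also have "\<dots> = infsum (f \<circ> snd) ?\<Sigma>"
    unfolding eq ..
  also have "\<dots> = infsum f {x \<in> S. g x \<in> X}"
    using infsum_reindex[OF inj, of f] image by simp
  finally show ?thesis .
qed

lemma infsum_pi0_square:
  assumes "square_summable u"
  shows "infsum (\<lambda>g. (pi0 J u g)^2) X = infsum (\<lambda>x. (u x)^2) {x \<in> Gset J. fst x \<in> X}"
proof -
  have Sigma: "{x \<in> Gset J. fst x \<in> X} = Sigma X (\<lambda>_. {1..J} \<rightarrow>\<^sub>E UNIV)"
    unfolding Gset_def by auto
  have "(\<lambda>x. (u x)^2) summable_on Sigma X (\<lambda>_. {1..J} \<rightarrow>\<^sub>E UNIV)"
    using assms unfolding square_summable_def by (rule summable_on_subset_banach) simp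
  then have "infsum (\<lambda>g. infsum (\<lambda>nu. (u (g, nu))^2) ({1..J} \<rightarrow>\<^sub>E UNIV)) X
      = infsum (\<lambda>x. (u x)^2) (Sigma X (\<lambda>_. {1..J} \<rightarrow>\<^sub>E UNIV))"
    by (rule infsum_Sigma_banach)
  moreover have "(pi0 J u g)^2 = infsum (\<lambda>nu. (u (g, nu))^2) ({1..J} \<rightarrow>\<^sub>E UNIV)" for g
    unfolding pi0_def using infsum_square_nonneg[of "\<lambda>nu. u (g, nu)"] by simp
  ultimately show ?thesis
    unfolding Sigma by simp
qed

lemma infsum_pij_square:
  assumes "square_summable u"
  shows "infsum (\<lambda>n. (pij J u j n)^2) X = infsum (\<lambda>x. (u x)^2) {x \<in> Gset J. snd x j \<in> X}"
proof -
  have "(\<lambda>x. (u x)^2) summable_on {x \<in> Gset J. snd x j \<in> X}"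
    using assms unfolding square_summable_def by (rule summable_on_subset_banach) simp
  then show ?thesis
    unfolding pij_def using infsum_over_fibres infsum_square_nonneg[of u] by simp
qed

lemma l2norm_square_outside_prodset_le:
  fixes u :: "'a \<times> (nat \<Rightarrow> nat) \<Rightarrow> real"
  assumes u: "is_l2 (Gset J) u" and "T0 \<subseteq> M0" and "\<forall>j\<in>{1..J}. T j \<subseteq> M j"
  shows "(l2norm (\<lambda>x. u x - Rset (prodset J M0 M) u x))^2
    \<le> infsum (\<lambda>g. (pi0 J u g)^2) (- T0) + (\<Sum>j = 1..J. infsum (\<lambda>n. (pij J u j n)^2) (- T j))"
proof -
  define S where "S = (\<lambda>i. if i = 0 then {x \<in> Gset J. fst x \<in> - T0}
    else {x \<in> Gset J. snd x i \<in> - T i})"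
  have u_sq: "square_summable u"
    using u by (rule is_l2_imp_square_summable)
  have u_outside: "u x = 0" if "x \<notin> Gset J" for x
    using u that unfolding is_l2_def by (cases x) simp
  have "(l2norm (\<lambda>x. u x - Rset (prodset J M0 M) u x))^2
      = infsum (\<lambda>x. (u x)^2) (Gset J - prodset J M0 M)"
    unfolding l2norm_square using u_outside by (intro infsum_cong_neutral) (auto simp: Rset_def)
  also have "\<dots> \<le> (\<Sum>i\<in>{0..J}. infsum (\<lambda>x. (u x)^2) (S i))"
  proof (rule infsum_le_sum_infsum_cover)
    show "(\<lambda>x. (u x)^2) summable_on UNIV"
      using u_sq unfolding square_summable_def .
    show "Gset J - prodset J M0 M \<subseteq> (\<Union>i\<in>{0..J}. S i)"
      using assms(2,3) unfolding S_def Gset_def prodset_def by (force simp: PiE_iff)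
  qed simp_all
  also have "\<dots> = infsum (\<lambda>x. (u x)^2) (S 0) + (\<Sum>j = 1..J. infsum (\<lambda>x. (u x)^2) (S j))"
    by (simp add: sum.atLeast_Suc_atMost)
  also have "\<dots> = infsum (\<lambda>g. (pi0 J u g)^2) (- T0) + (\<Sum>j = 1..J. infsum (\<lambda>n. (pij J u j n)^2) (- T j))"
    unfolding S_def using infsum_pi0_square[OF u_sq] infsum_pij_square[OF u_sq] by simp
  finally show ?thesis .
qed

lemma best_N_err_nonneg: "0 \<le> best_N_err H p N"
  unfolding best_N_err_def by (rule cInf_greatest) (auto simp: l2norm_nonneg intro!: exI[of _ "\<lambda>_. 0"])

lemma best_N_err_le_As_norm:
  "in_As H s p \<Longrightarrow> (real N + 1) powr s * best_N_err H p N \<le> As_norm H s p"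
  unfolding in_As_def As_norm_def by (intro cSUP_upper) auto

lemma best_N_err_less_imp_tail_less:
  assumes p: "square_summable p" and err: "best_N_err H p N < \<delta>"
  obtains T where "finite T" "card T \<le> N" "infsum (\<lambda>x. (p x)^2) (- T) \<le> \<delta>^2"
proof -
  let ?E = "{l2norm (\<lambda>x. p x - q x) | q.
    {x. q x \<noteq> 0} \<subseteq> H \<and> finite {x. q x \<noteq> 0} \<and> card {x. q x \<noteq> 0} \<le> N}"
  have "l2norm (\<lambda>x. p x - 0) \<in> ?E"
    by (intro CollectI exI[of _ "\<lambda>_. 0"]) simp
  then have "\<exists>e\<in>?E. e < \<delta>"
    using err unfolding best_N_err_def by (intro cInf_lessD) auto
  then obtain q where q: "finite {x. q x \<noteq> 0}" "card {x. q x \<noteq> 0} \<le> N" "l2norm (\<lambda>x. p x - q x) < \<delta>"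
    by blast
  define T where "T = {x. q x \<noteq> 0}"
  have "infsum (\<lambda>x. (p x)^2) (- T) = infsum (\<lambda>x. (p x - q x)^2) (- T)"
    unfolding T_def by (intro infsum_cong) auto
  also have "\<dots> \<le> infsum (\<lambda>x. (p x - q x)^2) UNIV"
    using square_summable_diff[OF p square_summable_finite_support[OF q(1)]]
    unfolding square_summable_def
    by (intro infsum_mono_neutral) (auto intro: summable_on_subset_banach)
  also have "\<dots> \<le> \<delta>^2"
    unfolding l2norm_square[symmetric] using q(3) l2norm_nonneg by (intro power_mono) auto
  finally show ?thesis
    using that q(1,2) unfolding T_def by blast
qed

lemma in_As_tail_bound:
  assumes p: "in_As H s p" and "0 < s" and "0 < \<delta>"
  obtains T where "finite T" "real (card T) \<le> (As_norm H s p / \<delta>) powr (1 / s)"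
    "infsum (\<lambda>x. (p x)^2) (- T) \<le> \<delta>^2"
proof -
  define a where "a = As_norm H s p"
  define x where "x = (a / \<delta>) powr (1 / s)"
  define N where "N = nat \<lfloor>x\<rfloor>"
  have "0 \<le> x"
    unfolding x_def by simp
  then have N_le: "real N \<le> x" and N_gt: "x < real N + 1"
    unfolding N_def by linarith+
  have a_bound: "(real N + 1) powr s * best_N_err H p N \<le> a"
    unfolding a_def using p by (rule best_N_err_le_As_norm)
  moreover have "0 \<le> (real N + 1) powr s * best_N_err H p N"
    using best_N_err_nonneg by (rule mult_nonneg_nonneg[OF powr_ge_zero])
  ultimately have "0 \<le> a"
    by linarith
  have "a / \<delta> < (real N + 1) powr s"
  proof (cases "a = 0")
    case False
    have "a / \<delta> = x powr s"
      unfolding x_def using False \<open>0 \<le> a\<close> \<open>0 < \<delta>\<close> \<open>0 < s\<close> by (simp add: powr_powr)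
    also have "\<dots> < (real N + 1) powr s"
      using \<open>0 < s\<close> \<open>0 \<le> x\<close> N_gt by (rule powr_less_mono2)
    finally show ?thesis .
  qed simp
  then have "a < (real N + 1) powr s * \<delta>"
    using \<open>0 < \<delta>\<close> by (simp add: divide_less_eq mult.commute)
  with a_bound have "(real N + 1) powr s * best_N_err H p N < (real N + 1) powr s * \<delta>"
    by (rule order_le_less_trans)
  then have "best_N_err H p N < \<delta>"
    by (rule mult_left_less_imp_less) simp
  moreover have "square_summable p"
    using p is_l2_imp_square_summable unfolding in_As_def by blast
  ultimately obtain T where "finite T" "card T \<le> N" "infsum (\<lambda>x. (p x)^2) (- T) \<le> \<delta>^2"
    using best_N_err_less_imp_tail_less by blast
  moreover have "real (card T) \<le> x" if "card T \<le> N"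
    using that N_le by linarith
  ultimately show ?thesis
    using that unfolding a_def x_def by blast
qed

section \<open>The cost of a minimal admissible product set\<close>

lemma Gset_nonempty: "Gset J \<noteq> {}"
  unfolding Gset_def by (simp add: PiE_eq_empty_iff)

lemma min_cost_le_card_tail_sets:
  fixes A :: "('a \<times> (nat \<Rightarrow> nat) \<Rightarrow> real) \<Rightarrow> ('a \<times> (nat \<Rightarrow> nat) \<Rightarrow> real)"
  assumes A: "bounded_spd (Gset J) A"
    and u: "is_l2 (Gset J) u"
    and w: "is_l2 (Gset J) w" "\<forall>x. x \<notin> prodset J L0 L \<longrightarrow> w x = 0"
    and alpha: "\<alpha> \<le> (1 / sqrt (cond_number (Gset J) A)) * sqrt (1 - opnorm (Gset J) A * lam^2)"
    and T: "finite T0" "\<forall>j\<in>{1..J}. finite (T j)"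
    and tails: "opnorm (Gset J) A * (infsum (\<lambda>g. (pi0 J u g)^2) (- T0)
        + (\<Sum>j = 1..J. infsum (\<lambda>n. (pij J u j n)^2) (- T j)))
      \<le> lam^2 * (l2norm (\<lambda>x. A w x - A u x))^2"
    and min: "\<forall>M0 M. finite_diff J L0 L M0 M \<longrightarrow>
        l2norm (Rset (prodset J M0 M) (\<lambda>x. A w x - A u x)) \<ge> \<alpha> * l2norm (\<lambda>x. A w x - A u x) \<longrightarrow>
        cost J L0 L Ls0 Ls \<le> cost J L0 L M0 M"
  shows "cost J L0 L Ls0 Ls \<le> card T0 + (\<Sum>j = 1..J. card (T j))"
proof -
  interpret spd_operator "Gset J" A
    using A Gset_nonempty by unfold_locales
  define M0 where "M0 = L0 \<union> T0"
  define M where "M = (\<lambda>j. L j \<union> T j)"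
  have "finite_diff J L0 L M0 M"
    unfolding finite_diff_def M0_def M_def using T by (auto intro: finite_subset[rotated])
  moreover have "\<alpha> * l2norm (\<lambda>x. A w x - A u x) \<le> l2norm (Rset (prodset J M0 M) (\<lambda>x. A w x - A u x))"
  proof (rule alpha_residual_le_restricted_residual[OF u w(1) is_l2_Rset[OF u]])
    show "\<forall>x. x \<notin> prodset J M0 M \<longrightarrow> w x = 0"
      using w(2) unfolding prodset_def M0_def M_def by (auto simp: PiE_iff)
    show "\<forall>x. x \<notin> prodset J M0 M \<longrightarrow> Rset (prodset J M0 M) u x = 0"
      by (simp add: Rset_def)
    have "(l2norm (\<lambda>x. u x - Rset (prodset J M0 M) u x))^2
      \<le> infsum (\<lambda>g. (pi0 J u g)^2) (- T0) + (\<Sum>j = 1..J. infsum (\<lambda>n. (pij J u j n)^2) (- T j))"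
      using u unfolding M0_def M_def by (rule l2norm_square_outside_prodset_le) auto
    then show "opnorm (Gset J) A * (l2norm (\<lambda>x. u x - Rset (prodset J M0 M) u x))^2
      \<le> lam^2 * (l2norm (\<lambda>x. A w x - A u x))^2"
      using tails opnorm_pos by (meson mult_left_mono less_imp_le order_trans)
  qed (rule alpha)
  ultimately have "cost J L0 L Ls0 Ls \<le> cost J L0 L M0 M"
    using min by blast
  also have "\<dots> \<le> card T0 + (\<Sum>j = 1..J. card (T j))"
    unfolding cost_def M0_def M_def using T
    by (intro add_mono sum_mono card_mono) auto
  finally show ?thesis .
qed

lemma min_cost_le_approximation_counts:
  fixes A :: "('a \<times> (nat \<Rightarrow> nat) \<Rightarrow> real) \<Rightarrow> ('a \<times> (nat \<Rightarrow> nat) \<Rightarrow> real)"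
  assumes A: "bounded_spd (Gset J) A"
    and u: "is_l2 (Gset J) u"
    and w: "is_l2 (Gset J) w" "\<forall>x. x \<notin> prodset J L0 L \<longrightarrow> w x = 0"
    and alpha: "\<alpha> \<le> (1 / sqrt (cond_number (Gset J) A)) * sqrt (1 - opnorm (Gset J) A * lam^2)"
    and s: "0 < s1" "0 < s2" and "0 < \<delta>"
    and u0: "in_As UNIV s1 (pi0 J u)" and uj: "\<forall>j\<in>{1..J}. in_As UNIV s2 (pij J u j)"
    and tolerance: "opnorm (Gset J) A * ((real J + 1) * \<delta>^2) \<le> lam^2 * (l2norm (\<lambda>x. A w x - A u x))^2"
    and min: "\<forall>M0 M. finite_diff J L0 L M0 M \<longrightarrow>
        l2norm (Rset (prodset J M0 M) (\<lambda>x. A w x - A u x)) \<ge> \<alpha> * l2norm (\<lambda>x. A w x - A u x) \<longrightarrow>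
        cost J L0 L Ls0 Ls \<le> cost J L0 L M0 M"
  shows "real (cost J L0 L Ls0 Ls) \<le> (As_norm UNIV s1 (pi0 J u) / \<delta>) powr (1 / s1)
    + (\<Sum>j = 1..J. (As_norm UNIV s2 (pij J u j) / \<delta>) powr (1 / s2))"
proof -
  interpret spd_operator "Gset J" A
    using A Gset_nonempty by unfold_locales
  obtain T0 where T0: "finite T0" "real (card T0) \<le> (As_norm UNIV s1 (pi0 J u) / \<delta>) powr (1 / s1)"
    "infsum (\<lambda>g. (pi0 J u g)^2) (- T0) \<le> \<delta>^2"
    using in_As_tail_bound[OF u0 s(1) \<open>0 < \<delta>\<close>] by blast
  have "\<forall>j\<in>{1..J}. \<exists>T. finite T \<and> real (card T) \<le> (As_norm UNIV s2 (pij J u j) / \<delta>) powr (1 / s2)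
    \<and> infsum (\<lambda>n. (pij J u j n)^2) (- T) \<le> \<delta>^2"
    using in_As_tail_bound[OF _ s(2) \<open>0 < \<delta>\<close>] uj by metis
  then obtain T where T: "\<forall>j\<in>{1..J}. finite (T j)
      \<and> real (card (T j)) \<le> (As_norm UNIV s2 (pij J u j) / \<delta>) powr (1 / s2)
      \<and> infsum (\<lambda>n. (pij J u j n)^2) (- T j) \<le> \<delta>^2"
    by metis
  have T_finite: "\<forall>j\<in>{1..J}. finite (T j)"
    using T by simp
  have "(\<Sum>j = 1..J. infsum (\<lambda>n. (pij J u j n)^2) (- T j)) \<le> (\<Sum>j = 1..J. \<delta>^2)"
    using T by (intro sum_mono) auto
  then have "opnorm (Gset J) A * (infsum (\<lambda>g. (pi0 J u g)^2) (- T0)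
      + (\<Sum>j = 1..J. infsum (\<lambda>n. (pij J u j n)^2) (- T j)))
    \<le> opnorm (Gset J) A * ((real J + 1) * \<delta>^2)"
    using T0(3) opnorm_pos by (intro mult_left_mono) (simp_all add: algebra_simps)
  then have "cost J L0 L Ls0 Ls \<le> card T0 + (\<Sum>j = 1..J. card (T j))"
    using tolerance by (intro min_cost_le_card_tail_sets[OF A u w alpha T0(1) T_finite _ min]) simp
  then have "real (cost J L0 L Ls0 Ls) \<le> real (card T0) + (\<Sum>j = 1..J. real (card (T j)))"
    by (metis of_nat_add of_nat_mono of_nat_sum)
  also have "\<dots> \<le> (As_norm UNIV s1 (pi0 J u) / \<delta>) powr (1 / s1)
      + (\<Sum>j = 1..J. (As_norm UNIV s2 (pij J u j) / \<delta>) powr (1 / s2))"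
    using T0(2) T by (intro add_mono sum_mono) auto
  finally show ?thesis .
qed

lemma tolerance_square_le:
  assumes "0 < K" "0 < lam"
  shows "K * ((real J + 1) * (R / ((real J + 1) * sqrt K / lam))^2) \<le> lam^2 * R^2"
proof -
  have "K * (n * (R / (n * sqrt K / lam))^2) = lam^2 * R^2 / n" if "0 < n" for n :: real
    using that assms by (simp add: power_divide power_mult_distrib field_simps power2_eq_square)
  then have "K * ((real J + 1) * (R / ((real J + 1) * sqrt K / lam))^2) = lam^2 * R^2 / (real J + 1)"
    by simp
  also have "\<dots> \<le> lam^2 * R^2"
    by (simp add: divide_le_eq mult_le_cancel_left1 mult_less_0_iff)
  finally show ?thesis .
qed

lemma powr_quotient_le:
  fixes a C R s :: real
  assumes "0 < R" "0 < C"
  shows "(a / (R / C)) powr (1 / s) \<le> 2 * C powr (1 / s) * R powr (- 1 / s) * a powr (1 / s)"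
proof -
  have "(a / (R / C)) powr (1 / s) = C powr (1 / s) * a powr (1 / s) / R powr (1 / s)"
    using assms by (simp add: powr_divide powr_mult mult.commute)
  also have "\<dots> = C powr (1 / s) * R powr (- 1 / s) * a powr (1 / s)"
    using powr_minus_divide[of R "1 / s"] by simp
  finally show ?thesis
    by simp
qed

theorem theorem4p5:
  fixes J :: nat
    and A :: "('a \<times> (nat \<Rightarrow> nat) \<Rightarrow> real) \<Rightarrow> ('a \<times> (nat \<Rightarrow> nat) \<Rightarrow> real)"
    and f u w :: "'a \<times> (nat \<Rightarrow> nat) \<Rightarrow> real"
    and \<alpha> lam s1 s2 :: real
    and L0 Ls0 :: "'a set" and L Ls :: "nat \<Rightarrow> nat set"
  assumes J: "J \<ge> 1"
    and A: "bounded_spd (Gset J) A"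
    and f: "is_l2 (Gset J) f"
    and u: "is_l2 (Gset J) u" "A u = f"
    and alpha: "0 < \<alpha>" "\<alpha> < 1 / sqrt (cond_number (Gset J) A)"
    and lam: "lam > 0"
      "\<alpha> \<le> (1 / sqrt (cond_number (Gset J) A)) * sqrt (1 - opnorm (Gset J) A * lam^2)"
    and Lfin: "finite L0" "\<forall>j\<in>{1..J}. finite (L j)"
    and w: "is_l2 (Gset J) w" "\<forall>x. x \<notin> prodset J L0 L \<longrightarrow> w x = 0"
    and s: "s1 > 0" "s2 > 0"
    and u0: "in_As UNIV s1 (pi0 J u)"
    and uj: "\<forall>j\<in>{1..J}. in_As UNIV s2 (pij J u j)"
    and star_fin: "finite_diff J L0 L Ls0 Ls"
    and star_adm: "l2norm (Rset (prodset J Ls0 Ls) (\<lambda>x. A w x - f x)) \<ge> \<alpha> * l2norm (\<lambda>x. A w x - f x)"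
    and star_min: "\<forall>M0 M. finite_diff J L0 L M0 M \<longrightarrow>
        l2norm (Rset (prodset J M0 M) (\<lambda>x. A w x - f x)) \<ge> \<alpha> * l2norm (\<lambda>x. A w x - f x) \<longrightarrow>
        cost J L0 L Ls0 Ls \<le> cost J L0 L M0 M"
  shows "real (cost J L0 L Ls0 Ls) \<le>
     2 * (((real J + 1) * sqrt (opnorm (Gset J) A) / lam) powr (1 / s1))
       * (l2norm (\<lambda>x. A w x - f x)) powr (- 1 / s1) * (As_norm UNIV s1 (pi0 J u)) powr (1 / s1)
   + 2 * (((real J + 1) * sqrt (opnorm (Gset J) A) / lam) powr (1 / s2))
       * (l2norm (\<lambda>x. A w x - f x)) powr (- 1 / s2)
       * (\<Sum>j = 1..J. (As_norm UNIV s2 (pij J u j)) powr (1 / s2))"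
proof -
  \<comment> \<open>Only the minimality of \<open>\<Lambda>\<^sup>*\<close> enters.\<close>
  interpret spd_operator "Gset J" A
    using A Gset_nonempty by unfold_locales
  define R where "R = l2norm (\<lambda>x. A w x - f x)"
  define C where "C = (real J + 1) * sqrt (opnorm (Gset J) A) / lam"
  have residual: "(\<lambda>x. A w x - f x) = (\<lambda>x. A w x - A u x)"
    using u(2) by simp
  have "0 < C"
    unfolding C_def using opnorm_pos lam(1) by simp
  consider "R = 0" | "0 < R"
    unfolding R_def using l2norm_nonneg by (metis less_eq_real_def)
  then show ?thesis
  proof cases
    case 1
    then have "cost J L0 L Ls0 Ls \<le> cost J L0 L L0 L"
      using star_min unfolding R_def finite_diff_def by (simp add: l2norm_nonneg)
    then show ?thesis
      unfolding cost_def by (simp add: sum_nonneg)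
  next
    case 2
    have "opnorm (Gset J) A * ((real J + 1) * (R / C)^2) \<le> lam^2 * (l2norm (\<lambda>x. A w x - A u x))^2"
      using tolerance_square_le[OF opnorm_pos lam(1)] unfolding C_def R_def residual .
    then have "real (cost J L0 L Ls0 Ls) \<le> (As_norm UNIV s1 (pi0 J u) / (R / C)) powr (1 / s1)
      + (\<Sum>j = 1..J. (As_norm UNIV s2 (pij J u j) / (R / C)) powr (1 / s2))"
      using 2 \<open>0 < C\<close> star_min[unfolded residual]
      by (intro min_cost_le_approximation_counts[OF A u(1) w lam(2) s _ u0 uj]) simp_all
    moreover have "(As_norm UNIV s1 (pi0 J u) / (R / C)) powr (1 / s1)
      \<le> 2 * C powr (1 / s1) * R powr (- 1 / s1) * As_norm UNIV s1 (pi0 J u) powr (1 / s1)"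
      using 2 \<open>0 < C\<close> by (rule powr_quotient_le)
    moreover have "(\<Sum>j = 1..J. (As_norm UNIV s2 (pij J u j) / (R / C)) powr (1 / s2))
      \<le> 2 * C powr (1 / s2) * R powr (- 1 / s2) * (\<Sum>j = 1..J. As_norm UNIV s2 (pij J u j) powr (1 / s2))"
      unfolding sum_distrib_left using 2 \<open>0 < C\<close> by (intro sum_mono powr_quotient_le)
    ultimately show ?thesis
      unfolding C_def R_def by linarith
  qed
qed

end
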